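(* $$\sum_{n\ge0}T(n)q^n=\sum_{n\ge0}\frac{q^{2n(n+1)}(q;q^2)_n(-q^{2n+2};q)_\infty}{(q^2;q^2)_n},$$ where $T(n)$ is the number of partitions $\lambda$ of $n$ such that: $m_j(\lambda)\le 1$ for odd $j$; $m_j(\lambda)=0$ for odd $j<R_1(\lambda)+2$; $m_j(\lambda)\ge2$ for even $j$ with $0<j<R_1(\lambda)$; and no two consecutive integers both appear as parts of $\lambda$.
   Context: $m_j(\lambda)$ is the multiplicity of $j$ in $\lambda$; $R_1(\lambda)$ is the largest part of multiplicity at least $2$, or $0$ if none. $(x;q)_n=\prod_{h=0}^{n-1}(1-xq^h)$, $(x;q)_0=1$, $(x;q)_\infty=\prod_{h\ge0}(1-xq^h)$; $T(0)=1$ (empty partition). *)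

theory Defs
  imports "HOL-Analysis.Analysis" "HOL-Library.Multiset"
begin

definition qpoch :: "complex \<Rightarrow> complex \<Rightarrow> nat \<Rightarrow> complex" where
  "qpoch x q n = (\<Prod>h<n. 1 - x * q ^ h)"

definition qpoch_inf :: "complex \<Rightarrow> complex \<Rightarrow> complex" where
  "qpoch_inf x q = (\<Prod>h. 1 - x * q ^ h)"

definition partitions :: "nat \<Rightarrow> nat multiset set" where
  "partitions n = {M. (\<forall>x\<in>#M. 0 < x) \<and> sum_mset M = n}"

definition R1 :: "nat multiset \<Rightarrow> nat" where
  "R1 M = Max ({j. 2 \<le> count M j} \<union> {0})"

definition T_cond :: "nat multiset \<Rightarrow> bool" where
  "T_cond M \<longleftrightarrow>
     (\<forall>j. odd j \<longrightarrow> count M j \<le> 1) \<and>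
     (\<forall>j. odd j \<and> j < R1 M + 2 \<longrightarrow> count M j = 0) \<and>
     (\<forall>j. even j \<and> 0 < j \<and> j < R1 M \<longrightarrow> 2 \<le> count M j) \<and>
     (\<forall>j. \<not> (j \<in># M \<and> Suc j \<in># M))"

definition T :: "nat \<Rightarrow> nat" where
  "T n = card {M \<in> partitions n. T_cond M}"

end

theory Submission
  imports Defs
begin

text \<open>
  A partition counted by \<open>T\<close> with \<open>R\<^sub>1 = 2a\<close> splits into its parts \<open>\<le> 2a\<close>, which are exactly
  \<open>2, 4, \<dots>, 2a\<close>, each at least twice, and a set of \<open>b\<close> parts \<open>> 2a + 1\<close>, no two consecutive.
  The generating function of these pairs is
  \<open>q\<^sup>2\<^sup>a\<^sup>(\<^sup>a\<^sup>+\<^sup>1\<^sup>) / (q\<^sup>2;q\<^sup>2)\<^sub>a \<cdot> q\<^sup>b\<^sup>(\<^sup>b\<^sup>+\<^sup>2\<^sup>a\<^sup>+\<^sup>1\<^sup>) / (q;q)\<^sub>b\<close>.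
  On the other side, expanding \<open>(q;q\<^sup>2)\<^sub>n\<close> by the finite q-binomial theorem and
  \<open>(-q\<^sup>2\<^sup>n\<^sup>+\<^sup>2;q)\<^sub>\<infinity>\<close> by Euler's identity turns the series into an absolutely convergent triple
  sum over \<open>(n, i, c)\<close>. Regrouping it by \<open>a = n - i\<close> and \<open>b = c + 2i\<close>, the inner sum over \<open>i\<close>
  collapses by comparing coefficients of \<open>z\<^sup>b\<close> in \<open>(-z;q)\<^sub>\<infinity> = (z\<^sup>2;q\<^sup>2)\<^sub>\<infinity> / (z;q)\<^sub>\<infinity>\<close>,
  and what remains is exactly the generating function above.
\<close>

section \<open>The q-factorial and Gaussian binomial coefficients\<close>

definition qfact :: "complex \<Rightarrow> nat \<Rightarrow> complex" where
  "qfact p n = (\<Prod>h<n. 1 - p ^ Suc h)"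

lemma qpoch_self_eq_qfact: "qpoch p p n = qfact p n"
  by (simp add: qpoch_def qfact_def)

lemma qfact_0 [simp]: "qfact p 0 = 1"
  by (simp add: qfact_def)

lemma qfact_Suc: "qfact p (Suc n) = qfact p n * (1 - p ^ Suc n)"
  by (simp add: qfact_def)

lemma norm_power_less_one: "norm (q::complex) < 1 \<Longrightarrow> 0 < k \<Longrightarrow> norm (q ^ k) < 1"
  by (simp add: norm_power power_less_one_iff)

lemma power_neq_one_if_norm_less_one:
  assumes "norm (p::complex) < 1" "0 < k" shows "p ^ k \<noteq> 1"
  using norm_power_less_one[OF assms] by auto

lemma qfact_nonzero: "norm p < 1 \<Longrightarrow> qfact p n \<noteq> 0"
  by (induction n) (auto simp: qfact_Suc dest: power_neq_one_if_norm_less_one[of p "Suc _"])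

definition qbinom :: "complex \<Rightarrow> nat \<Rightarrow> nat \<Rightarrow> complex" where
  "qbinom p n i = (if i \<le> n then qfact p n / (qfact p i * qfact p (n - i)) else 0)"

lemma qbinom_0 [simp]: "norm p < 1 \<Longrightarrow> qbinom p n 0 = 1"
  by (simp add: qbinom_def qfact_nonzero)

lemma qbinom_pascal:
  assumes "norm p < 1"
  shows "qbinom p (Suc n) (Suc i) = qbinom p n (Suc i) + p ^ (n - i) * qbinom p n i"
proof (cases "Suc i \<le> n")
  case True
  then obtain k where n: "n = Suc i + k" by (metis le_add_diff_inverse)
  have nz: "qfact p m \<noteq> 0" "1 - p ^ Suc m \<noteq> 0" for m
    using qfact_nonzero[OF assms] power_neq_one_if_norm_less_one[OF assms, of "Suc m"] by auto
  have numerator_split: "A * (1 - x * y) / (a * (1 - x) * (b * (1 - y)))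
      = A / (a * (1 - x) * b) + y * (A / (a * (b * (1 - y))))"
    if "a \<noteq> 0" "b \<noteq> 0" "1 - x \<noteq> 0" "1 - y \<noteq> 0" for A a b x y :: complex
  proof -
    have "A * (1 - x * y) = A * (1 - y) + A * (y * (1 - x))"
      by (simp add: algebra_simps)
    then show ?thesis
      using that by (simp add: add_divide_distrib mult_ac)
  qed
  have "p ^ Suc n = p ^ Suc i * p ^ Suc k"
    by (simp add: n power_add[symmetric])
  then show ?thesis
    using numerator_split[of "qfact p i" "qfact p k" "p ^ Suc i" "p ^ Suc k" "qfact p n"] nz[of i] nz[of k]
    by (simp add: qbinom_def n qfact_Suc del: power_Suc)
next
  case False
  then show ?thesis
    by (cases "i = n") (auto simp: qbinom_def qfact_nonzero[OF assms])
qed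

theorem qbinomial_theorem:
  assumes "norm p < 1"
  shows "(\<Prod>h<n. 1 + y * p ^ h) = (\<Sum>i\<le>n. y ^ i * p ^ (i choose 2) * qbinom p n i)"
proof (induction n)
  case 0
  show ?case using assms by (simp add: numeral_2_eq_2)
next
  case (Suc n)
  define f where "f m i = y ^ i * p ^ (i choose 2) * qbinom p m i" for m i
  have step: "f (Suc n) (Suc i) = f n (Suc i) + y * p ^ n * f n i" if "i \<le> n" for i
  proof -
    have "(Suc i choose 2) + (n - i) = (i choose 2) + n"
      using that by (simp add: numeral_2_eq_2)
    then have "p ^ (Suc i choose 2) * p ^ (n - i) = p ^ (i choose 2) * p ^ n"
      by (metis power_add)
    then show ?thesis
      by (simp add: f_def qbinom_pascal[OF assms] algebra_simps)
  qed
  have shift: "(\<Sum>i\<le>Suc m. f k i) = 1 + (\<Sum>i\<le>m. f k (Suc i))" for k m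
    using assms by (simp add: f_def sum.atMost_Suc_shift numeral_2_eq_2 del: sum.atMost_Suc)
  have "(\<Sum>i\<le>Suc n. f (Suc n) i) = 1 + (\<Sum>i\<le>n. f n (Suc i) + y * p ^ n * f n i)"
    unfolding shift by (simp add: step)
  also have "\<dots> = 1 + (\<Sum>i\<le>n. f n (Suc i)) + y * p ^ n * (\<Sum>i\<le>n. f n i)"
    by (simp add: sum.distrib sum_distrib_left)
  also have "1 + (\<Sum>i\<le>n. f n (Suc i)) = (\<Sum>i\<le>n. f n i)"
    using shift[of n n] by (simp add: f_def qbinom_def)
  finally show ?case
    by (simp add: Suc f_def algebra_simps)
qed

lemma qfact_tendsto_nonzero:
  assumes "norm p < 1"
  obtains L where "L \<noteq> 0" "qfact p \<longlonglongrightarrow> L"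
proof
  define f where "f h = 1 - p ^ Suc h" for h
  have "summable (\<lambda>h. norm (f h - 1))"
    using assms by (simp add: f_def norm_power summable_geometric summable_Suc_iff del: power_Suc)
  then have conv: "convergent_prod f"
    by (intro abs_convergent_prod_imp_convergent_prod summable_imp_abs_convergent_prod)
  have "f h \<noteq> 0" for h
    using power_neq_one_if_norm_less_one[OF assms, of "Suc h"] by (simp add: f_def)
  then show "prodinf f \<noteq> 0"
    by (intro prodinf_nonzero[OF conv])
  have "(\<lambda>n. qfact p (Suc n)) \<longlonglongrightarrow> prodinf f"
    using convergent_prod_LIMSEQ[OF conv] by (simp add: qfact_def f_def lessThan_Suc_atMost)
  then show "qfact p \<longlonglongrightarrow> prodinf f"
    by (rule LIMSEQ_imp_Suc)
qed

lemma Bseq_qfact: "norm p < 1 \<Longrightarrow> Bseq (qfact p)"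
  by (metis qfact_tendsto_nonzero convergentI convergent_imp_Bseq)

lemma Bseq_inverse_qfact: "norm p < 1 \<Longrightarrow> Bseq (\<lambda>n. inverse (qfact p n))"
  by (metis qfact_tendsto_nonzero tendsto_inverse convergentI convergent_imp_Bseq)

lemma qbinom_tendsto:
  assumes "norm p < 1"
  shows "(\<lambda>N. qbinom p N c) \<longlonglongrightarrow> 1 / qfact p c"
proof -
  obtain L where L: "L \<noteq> 0" "qfact p \<longlonglongrightarrow> L"
    using qfact_tendsto_nonzero[OF assms] .
  have "(\<lambda>n. qfact p (n + c) / (qfact p c * qfact p n)) \<longlonglongrightarrow> L / (qfact p c * L)"
    using L qfact_nonzero[OF assms] by (intro tendsto_intros LIMSEQ_ignore_initial_segment) auto
  then have "(\<lambda>n. qbinom p (n + c) c) \<longlonglongrightarrow> 1 / qfact p c"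
    using L(1) by (simp add: qbinom_def)
  then show ?thesis
    by (rule LIMSEQ_offset)
qed

lemma qbinom_bounded:
  assumes "norm p < 1"
  obtains K where "\<And>N c. norm (qbinom p N c) \<le> K"
proof -
  obtain D where D: "\<And>n. norm (qfact p n) \<le> D"
    using Bseq_qfact[OF assms] unfolding Bseq_def by blast
  obtain E where E: "\<And>n. norm (inverse (qfact p n)) \<le> E"
    using Bseq_inverse_qfact[OF assms] unfolding Bseq_def by blast
  have "0 \<le> D" "0 \<le> E"
    using order_trans[OF norm_ge_zero D] order_trans[OF norm_ge_zero E] by auto
  have "norm (qbinom p N c) \<le> D * (E * E)" for N c
  proof (cases "c \<le> N")
    case True
    have "norm (qbinom p N c) = norm (qfact p N) * (norm (inverse (qfact p c)) * norm (inverse (qfact p (N - c))))"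
      using True by (simp add: qbinom_def norm_divide norm_mult norm_inverse divide_inverse)
    also have "\<dots> \<le> D * (E * E)"
      using D E \<open>0 \<le> D\<close> \<open>0 \<le> E\<close> by (intro mult_mono) auto
    finally show ?thesis .
  next
    case False
    then show ?thesis using \<open>0 \<le> D\<close> \<open>0 \<le> E\<close> by (simp add: qbinom_def)
  qed
  then show thesis by (rule that)
qed

lemma summable_power_mult_power_choose_2:
  fixes r y :: real
  assumes "0 \<le> r" "r < 1" "0 \<le> y"
  shows "summable (\<lambda>c. y ^ c * r ^ (c choose 2))"
proof -
  have "(\<lambda>n. y * r ^ n) \<longlonglongrightarrow> y * 0"
    using assms by (intro tendsto_intros) auto
  then have "eventually (\<lambda>n. y * r ^ n < 1/2) sequentially"
    by (intro order_tendstoD) auto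
  then obtain N where N: "\<And>n. n \<ge> N \<Longrightarrow> y * r ^ n < 1/2"
    by (auto simp: eventually_sequentially)
  show ?thesis
  proof (rule summable_ratio_test[of "1/2" N])
    fix n assume "n \<ge> N"
    have "norm (y ^ Suc n * r ^ (Suc n choose 2)) = (y * r ^ n) * (y ^ n * r ^ (n choose 2))"
      using assms by (simp add: numeral_2_eq_2 power_add abs_mult)
    also have "\<dots> \<le> 1/2 * (y ^ n * r ^ (n choose 2))"
      using N[OF \<open>n \<ge> N\<close>] assms by (intro mult_right_mono) auto
    finally show "norm (y ^ Suc n * r ^ (Suc n choose 2)) \<le> 1/2 * norm (y ^ n * r ^ (n choose 2))"
      using assms by simp
  qed simp
qed

text \<open>Euler's identity, as the limit \<open>N \<rightarrow> \<infinity>\<close> of the q-binomial theorem (Tannery's theorem).\<close>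
theorem euler_identity:
  assumes "norm q < 1"
  shows "(\<lambda>c. x ^ c * q ^ (c choose 2) / qfact q c) sums (\<Prod>h. 1 + x * q ^ h)"
    and "summable (\<lambda>c. norm (x ^ c * q ^ (c choose 2) / qfact q c))"
proof -
  obtain K where K: "\<And>N c. norm (qbinom q N c) \<le> K"
    using qbinom_bounded[OF assms] by blast
  define a where "a c N = x ^ c * q ^ (c choose 2) * qbinom q N c" for c N
  define b where "b c = x ^ c * q ^ (c choose 2) / qfact q c" for c
  have bound: "norm (a c N) \<le> norm x ^ c * norm q ^ (c choose 2) * K" for c N
    unfolding a_def norm_mult norm_power by (intro mult_left_mono K) auto
  have lim: "(\<lambda>N. a c N) \<longlonglongrightarrow> b c" for c
    unfolding a_def b_def using qbinom_tendsto[OF assms, of c] by (auto intro!: tendsto_eq_intros)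
  have major: "summable (\<lambda>c. norm x ^ c * norm q ^ (c choose 2) * K)"
    using assms by (intro summable_mult2 summable_power_mult_power_choose_2) auto
  have tannery: "eventually (\<lambda>N. summable (\<lambda>c. norm (a c N))) sequentially \<and>
      summable (\<lambda>c. norm (b c)) \<and> (\<lambda>N. \<Sum>c. a c N) \<longlonglongrightarrow> (\<Sum>c. b c)"
    by (rule tannerys_theorem[OF lim _ major]) (auto intro!: always_eventually bound)
  have "(\<Sum>c. a c N) = (\<Prod>h<N. 1 + x * q ^ h)" for N
  proof -
    have "(\<lambda>c. a c N) sums (\<Sum>c\<le>N. a c N)"
      by (rule sums_finite) (auto simp: a_def qbinom_def)
    then show ?thesis
      unfolding a_def qbinomial_theorem[OF assms] by (rule sums_unique[symmetric])
  qed
  then have partial: "(\<lambda>N. \<Prod>h<N. 1 + x * q ^ h) \<longlonglongrightarrow> (\<Sum>c. b c)"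
    using tannery by simp
  have "summable (\<lambda>h. norm ((1 + x * q ^ h) - 1))"
    using assms by (simp add: norm_mult norm_power summable_geometric)
  then have "convergent_prod (\<lambda>h. 1 + x * q ^ h)"
    by (intro abs_convergent_prod_imp_convergent_prod summable_imp_abs_convergent_prod)
  then have "(\<lambda>N. \<Prod>h<Suc N. 1 + x * q ^ h) \<longlonglongrightarrow> (\<Prod>h. 1 + x * q ^ h)"
    using convergent_prod_LIMSEQ by (simp add: lessThan_Suc_atMost)
  then have "(\<Prod>h. 1 + x * q ^ h) = (\<Sum>c. b c)"
    using LIMSEQ_Suc[OF partial] by (rule LIMSEQ_unique)
  moreover have "summable b"
    using tannery by (blast intro: summable_norm_cancel)
  ultimately show "(\<lambda>c. x ^ c * q ^ (c choose 2) / qfact q c) sums (\<Prod>h. 1 + x * q ^ h)"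
    by (simp add: b_def[abs_def] summable_sums)
  show "summable (\<lambda>c. norm (x ^ c * q ^ (c choose 2) / qfact q c))"
    using tannery by (simp add: b_def)
qed

section \<open>An identity between q-series coefficients\<close>

text \<open>Coefficients of \<open>z\<^sup>b\<close> in \<open>(-z;q)\<^sub>\<infinity>\<close>, of \<open>z\<^sup>2\<^sup>i\<close> in \<open>(z\<^sup>2;q\<^sup>2)\<^sub>\<infinity>\<close> and of \<open>z\<^sup>b\<^sup>-\<^sup>2\<^sup>i\<close> in \<open>1/(z;q)\<^sub>\<infinity>\<close>;
  the identity \<open>(-z;q)\<^sub>\<infinity> = (z\<^sup>2;q\<^sup>2)\<^sub>\<infinity> / (z;q)\<^sub>\<infinity>\<close> becomes \<open>euler_coeff_eq_convolution\<close>.\<close>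

definition euler_coeff :: "complex \<Rightarrow> nat \<Rightarrow> complex" where
  "euler_coeff q b = q ^ (b choose 2) / qfact q b"

definition square_coeff :: "complex \<Rightarrow> nat \<Rightarrow> complex" where
  "square_coeff q i = (-1) ^ i * q ^ (2 * (i choose 2)) / qfact (q\<^sup>2) i"

definition recip_coeff :: "complex \<Rightarrow> nat \<Rightarrow> nat \<Rightarrow> complex" where
  "recip_coeff q b i = (if 2 * i \<le> b then 1 / qfact q (b - 2 * i) else 0)"

definition coeff_convolution :: "complex \<Rightarrow> nat \<Rightarrow> complex" where
  "coeff_convolution q b = (\<Sum>i\<le>b. square_coeff q i * recip_coeff q b i)"

lemma square_coeff_Suc:
  assumes "norm q < 1"
  shows "square_coeff q (Suc i) * (1 - q ^ (2 * Suc i)) = - (q ^ (2 * i) * square_coeff q i)"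
proof -
  have "qfact (q\<^sup>2) i \<noteq> 0"
    using assms by (intro qfact_nonzero) (simp add: norm_power power_less_one_iff)
  moreover have "1 - q ^ (2 * Suc i) \<noteq> 0"
    using power_neq_one_if_norm_less_one[OF assms, of "2 * Suc i"] by simp
  moreover have "2 * (Suc i choose 2) = 2 * (i choose 2) + 2 * i"
    by (simp add: numeral_2_eq_2)
  moreover have "qfact (q\<^sup>2) (Suc i) = qfact (q\<^sup>2) i * (1 - q ^ (2 * Suc i))"
    by (simp only: qfact_Suc power_mult)
  ultimately show ?thesis
    unfolding square_coeff_def by (simp only: power_add) (simp add: field_simps)
qed

lemma recip_coeff_Suc_Suc:
  assumes "norm q < 1"
  shows "recip_coeff q (Suc (Suc b)) i * (1 - q ^ (Suc (Suc b) - 2 * i)) = recip_coeff q (Suc b) i"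
proof (cases "2 * i \<le> Suc b")
  case True
  then have "Suc (Suc b) - 2 * i = Suc (Suc b - 2 * i)"
    by simp
  moreover have "qfact q (Suc b - 2 * i) \<noteq> 0" "1 - q ^ Suc (Suc b - 2 * i) \<noteq> 0"
    using qfact_nonzero[OF assms] power_neq_one_if_norm_less_one[OF assms, of "Suc (Suc b - 2 * i)"]
    by auto
  ultimately show ?thesis
    using True by (simp add: recip_coeff_def qfact_Suc del: power_Suc)
qed (auto simp: recip_coeff_def)

lemma square_recip_coeff_Suc:
  assumes "norm q < 1"
  shows "square_coeff q (Suc i) * recip_coeff q (Suc (Suc b)) (Suc i) * q ^ (b - 2 * i) * (1 - q ^ (2 * Suc i))
       = - (q ^ b * (square_coeff q i * recip_coeff q b i))"
proof (cases "2 * i \<le> b")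
  case True
  have "recip_coeff q (Suc (Suc b)) (Suc i) = recip_coeff q b i"
    using True by (simp add: recip_coeff_def)
  moreover have "q ^ b = q ^ (b - 2 * i) * q ^ (2 * i)"
    using True by (simp add: power_add[symmetric])
  ultimately have "square_coeff q (Suc i) * recip_coeff q (Suc (Suc b)) (Suc i) * q ^ (b - 2 * i) * (1 - q ^ (2 * Suc i))
      = (square_coeff q (Suc i) * (1 - q ^ (2 * Suc i))) * recip_coeff q b i * q ^ (b - 2 * i)"
    by (simp add: algebra_simps)
  also have "\<dots> = - (q ^ b * (square_coeff q i * recip_coeff q b i))"
    unfolding square_coeff_Suc[OF assms] \<open>q ^ b = _\<close> by (simp add: algebra_simps)
  finally show ?thesis .
qed (simp add: recip_coeff_def)

lemma coeff_convolution_rec: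
  assumes "norm q < 1"
  shows "(1 - q ^ Suc (Suc b)) * coeff_convolution q (Suc (Suc b))
       = coeff_convolution q (Suc b) - q ^ b * coeff_convolution q b"
proof -
  define a where "a i = square_coeff q i" for i
  define g where "g i = recip_coeff q (Suc (Suc b)) i" for i
  define c where "c i = Suc (Suc b) - 2 * i" for i
  have termwise: "(1 - q ^ Suc (Suc b)) * (a i * g i) = a i * (g i * (1 - q ^ c i)) + a i * g i * q ^ c i * (1 - q ^ (2 * i))" for i
  proof (cases "2 * i \<le> Suc (Suc b)")
    case True
    then have "q ^ Suc (Suc b) = q ^ c i * q ^ (2 * i)"
      by (simp add: c_def power_add[symmetric])
    then show ?thesis by (simp add: algebra_simps)
  qed (simp add: g_def recip_coeff_def)
  have first: "(\<Sum>i\<le>Suc (Suc b). a i * (g i * (1 - q ^ c i))) = coeff_convolution q (Suc b)"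
    using recip_coeff_Suc_Suc[OF assms]
    by (simp add: a_def g_def c_def coeff_convolution_def recip_coeff_def)
  have "(\<Sum>i\<le>Suc (Suc b). a i * g i * q ^ c i * (1 - q ^ (2 * i)))
      = (\<Sum>i\<le>Suc b. a (Suc i) * g (Suc i) * q ^ c (Suc i) * (1 - q ^ (2 * Suc i)))"
    by (simp add: sum.atMost_Suc_shift del: sum.atMost_Suc)
  also have "\<dots> = - (q ^ b * coeff_convolution q b)"
    using square_recip_coeff_Suc[OF assms]
    by (simp add: a_def g_def c_def coeff_convolution_def sum_negf sum_distrib_left recip_coeff_def)
  finally have second: "(\<Sum>i\<le>Suc (Suc b). a i * g i * q ^ c i * (1 - q ^ (2 * i))) = - (q ^ b * coeff_convolution q b)" .
  have "(1 - q ^ Suc (Suc b)) * coeff_convolution q (Suc (Suc b))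
      = (\<Sum>i\<le>Suc (Suc b). (1 - q ^ Suc (Suc b)) * (a i * g i))"
    unfolding coeff_convolution_def sum_distrib_left a_def g_def ..
  also have "\<dots> = (\<Sum>i\<le>Suc (Suc b). a i * (g i * (1 - q ^ c i)))
      + (\<Sum>i\<le>Suc (Suc b). a i * g i * q ^ c i * (1 - q ^ (2 * i)))"
    unfolding termwise sum.distrib ..
  finally show ?thesis
    unfolding first second by simp
qed

lemma euler_coeff_rec:
  assumes "norm q < 1"
  shows "(1 - q ^ Suc (Suc b)) * euler_coeff q (Suc (Suc b)) = euler_coeff q (Suc b) - q ^ b * euler_coeff q b"
proof -
  have step: "(1 - q ^ Suc n) * euler_coeff q (Suc n) = q ^ n * euler_coeff q n" for n
  proof -
    have "Suc n choose 2 = (n choose 2) + n"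
      by (simp add: numeral_2_eq_2)
    moreover have "1 - q ^ Suc n \<noteq> 0"
      using power_neq_one_if_norm_less_one[OF assms, of "Suc n"] by simp
    ultimately show ?thesis
      using qfact_nonzero[OF assms, of n]
      by (simp add: euler_coeff_def qfact_Suc power_add field_simps del: power_Suc)
  qed
  have "euler_coeff q (Suc b) - q ^ b * euler_coeff q b = q ^ Suc b * euler_coeff q (Suc b)"
    using step[of b] by (simp add: algebra_simps)
  then show ?thesis
    using step[of "Suc b"] by simp
qed

lemma euler_coeff_eq_convolution:
  assumes "norm q < 1"
  shows "euler_coeff q b = coeff_convolution q b"
proof (induction b rule: induct_nat_012)
  case (ge2 n)
  have "1 - q ^ Suc (Suc n) \<noteq> 0"
    using power_neq_one_if_norm_less_one[OF assms, of "Suc (Suc n)"] by simp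
  moreover have "(1 - q ^ Suc (Suc n)) * euler_coeff q (Suc (Suc n))
      = (1 - q ^ Suc (Suc n)) * coeff_convolution q (Suc (Suc n))"
    unfolding euler_coeff_rec[OF assms] coeff_convolution_rec[OF assms] ge2 ..
  ultimately show ?case
    by (rule mult_left_cancel[THEN iffD1])
qed (simp_all add: euler_coeff_def coeff_convolution_def square_coeff_def recip_coeff_def
       qfact_Suc numeral_2_eq_2)

section \<open>Expanding the series into an absolutely convergent triple sum\<close>

lemma has_sum_mult_Times:
  fixes f g :: "_ \<Rightarrow> complex"
  assumes f: "(f has_sum a) A" and g: "(g has_sum b) B"
  shows "((\<lambda>(x, y). f x * g y) has_sum a * b) (A \<times> B)"
proof -
  have fs: "(\<lambda>x. norm (f x)) summable_on A" and gs: "(\<lambda>y. norm (g y)) summable_on B"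
    using f g summable_on_iff_abs_summable_on_complex has_sum_imp_summable by blast+
  define h where "h = (\<lambda>(x, y). f x * g y)"
  have "(\<lambda>x. norm (f x) * infsum (\<lambda>y. norm (g y)) B) summable_on A"
    by (rule summable_on_cmult_left[OF fs])
  moreover have "(\<lambda>y. norm (f x * g y)) summable_on B" for x
    using summable_on_cmult_right[OF gs, of "norm (f x)"] by (simp add: norm_mult)
  ultimately have "(\<lambda>z. norm (h z)) summable_on A \<times> B"
    using Infinite_Sum.abs_summable_on_Sigma_iff[of h A "\<lambda>_. B"]
    by (simp add: h_def norm_mult infsum_cmult_right[OF gs] abs_mult abs_of_nonneg infsum_nonneg)
  then have "h summable_on A \<times> B"
    by (rule abs_summable_summable)
  then show ?thesis
    unfolding h_def using has_sum_cmult_right[OF g] has_sum_cmult_left[OF f]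
    by (intro has_sum_SigmaI) auto
qed

lemma two_mult_choose_two_int: "2 * int (n choose 2) = int n * (int n - 1)"
proof (induction n)
  case (Suc n)
  have "Suc n choose 2 = (n choose 2) + n"
    by (simp add: numeral_2_eq_2)
  then show ?case
    using Suc by (simp add: algebra_simps)
qed (simp add: numeral_2_eq_2)

lemma two_mult_choose_two: "2 * (n choose 2) = n * (n - 1)"
proof -
  have "int (2 * (n choose 2)) = int (n * (n - 1))"
    using two_mult_choose_two_int[of n] by (cases n) (simp_all add: algebra_simps)
  then show ?thesis
    by (simp only: of_nat_eq_iff)
qed

definition series_term :: "complex \<Rightarrow> nat \<Rightarrow> complex" where
  "series_term q n = q ^ (2*n*(n+1)) * qpoch q (q^2) n * qpoch_inf (- (q ^ (2*n+2))) q / qpoch (q^2) (q^2) n"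

definition triple_term :: "complex \<Rightarrow> nat \<Rightarrow> nat \<Rightarrow> nat \<Rightarrow> complex" where
  "triple_term q n i c = q ^ (2*n*(n+1)) * (-q) ^ i * q ^ (2 * (i choose 2)) * q ^ ((2*n+2)*c + (c choose 2))
      / (qfact (q\<^sup>2) i * qfact (q\<^sup>2) (n - i) * qfact q c)"

definition block_term :: "complex \<Rightarrow> nat \<Rightarrow> nat \<Rightarrow> complex" where
  "block_term q a b = q ^ (2*a*(a+1)) / qfact (q\<^sup>2) a * (q ^ (b*(b+2*a+1)) / qfact q b)"

text \<open>The finite q-binomial theorem expands \<open>(q;q\<^sup>2)\<^sub>n\<close> over \<open>i\<close>, Euler's identity expands
  \<open>(-q\<^sup>2\<^sup>n\<^sup>+\<^sup>2;q)\<^sub>\<infinity>\<close> over \<open>c\<close>.\<close>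
lemma series_term_has_sum:
  assumes "norm q < 1"
  shows "((\<lambda>(i, c). triple_term q n i c) has_sum series_term q n) ({..n} \<times> UNIV)"
proof -
  have q2: "norm (q\<^sup>2) < 1"
    using assms by (simp add: norm_power power_less_one_iff)
  define x where "x = q ^ (2*n+2)"
  define A where "A i = q ^ (2*n*(n+1)) * ((-q) ^ i * (q\<^sup>2) ^ (i choose 2) * qbinom (q\<^sup>2) n i) / qfact (q\<^sup>2) n" for i
  define B where "B c = x ^ c * q ^ (c choose 2) / qfact q c" for c
  have "(B has_sum (\<Prod>h. 1 + x * q ^ h)) UNIV"
    unfolding B_def by (rule norm_summable_imp_has_sum[OF euler_identity(2,1)[OF assms]])
  then have prod: "((\<lambda>(i, c). A i * B c) has_sum (\<Sum>i\<le>n. A i) * (\<Prod>h. 1 + x * q ^ h)) ({..n} \<times> UNIV)"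
    by (rule has_sum_mult_Times[OF has_sum_finiteI[OF finite_atMost refl]])
  have "qpoch q (q\<^sup>2) n = (\<Prod>h<n. 1 + (-q) * (q\<^sup>2) ^ h)"
    by (simp add: qpoch_def)
  then have "(\<Sum>i\<le>n. A i) = q ^ (2*n*(n+1)) * qpoch q (q\<^sup>2) n / qfact (q\<^sup>2) n"
    unfolding qbinomial_theorem[OF q2] A_def by (simp add: sum_distrib_left sum_divide_distrib)
  then have series: "(\<Sum>i\<le>n. A i) * (\<Prod>h. 1 + x * q ^ h) = series_term q n"
    by (simp add: series_term_def qpoch_self_eq_qfact qpoch_inf_def x_def)
  have "A i * B c = triple_term q n i c" if "i \<le> n" for i c
  proof -
    have "x ^ c = q ^ ((2*n+2)*c)"
      unfolding x_def by (rule power_mult[symmetric])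
    then have "B c = q ^ ((2*n+2)*c + (c choose 2)) / qfact q c"
      by (simp only: B_def power_add)
    then show ?thesis
      using that qfact_nonzero[OF q2, of n]
      by (simp add: A_def qbinom_def triple_term_def power_mult field_simps)
  qed
  then have "((\<lambda>(i, c). A i * B c) has_sum series_term q n) ({..n} \<times> UNIV)
      \<longleftrightarrow> ((\<lambda>(i, c). triple_term q n i c) has_sum series_term q n) ({..n} \<times> UNIV)"
    by (intro has_sum_cong) auto
  then show ?thesis
    using prod[unfolded series] by blast
qed

lemma triple_exponent_eq:
  "2*(a+i)*(a+i+1) + i + (2*(a+i)+2)*c + (c choose 2)
     = 2*a*(a+1) + ((c+2*i) choose 2) + 2*(c+2*i)*(a+1)"
proof -
  have "2 * int (2*(a+i)*(a+i+1) + i + (2*(a+i)+2)*c + (c choose 2))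
      = 2 * int (2*a*(a+1) + ((c+2*i) choose 2) + 2*(c+2*i)*(a+1))"
    using two_mult_choose_two_int[of c] two_mult_choose_two_int[of "c+2*i"]
    by (simp add: algebra_simps)
  then show ?thesis
    by (simp only: mult_cancel_left of_nat_eq_iff) simp
qed

lemma block_term_eq_sum:
  assumes "norm q < 1"
  shows "block_term q a b = (\<Sum>i | 2*i \<le> b. triple_term q (a+i) i (b - 2*i))"
proof -
  define e where "e = 2*a*(a+1) + (b choose 2) + 2*b*(a+1)"
  define K where "K = q ^ e / qfact (q\<^sup>2) a"
  have "b*(b+2*a+1) = (b choose 2) + ((b choose 2) + 2*b*(a+1))"
    using two_mult_choose_two[of b] by (cases b) (simp_all add: algebra_simps)
  then have "q ^ (2*a*(a+1)) * q ^ (b*(b+2*a+1)) = q ^ e * q ^ (b choose 2)"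
    unfolding e_def by (simp only: power_add mult_ac)
  then have "block_term q a b = K * euler_coeff q b"
    by (simp add: block_term_def K_def euler_coeff_def)
  also have "\<dots> = (\<Sum>i\<le>b. K * (square_coeff q i * recip_coeff q b i))"
    by (simp add: euler_coeff_eq_convolution[OF assms] coeff_convolution_def sum_distrib_left)
  also have "\<dots> = (\<Sum>i\<in>{i \<in> {..b}. 2*i \<le> b}. triple_term q (a+i) i (b - 2*i))"
    unfolding sum.inter_filter[OF finite_atMost]
  proof (rule sum.cong[OF refl])
    fix i
    show "K * (square_coeff q i * recip_coeff q b i) = (if 2*i \<le> b then triple_term q (a+i) i (b - 2*i) else 0)"
    proof (cases "2*i \<le> b")
      case True
      then obtain c where b: "b = c + 2*i"
        by (metis le_add_diff_inverse2)
      have "2*(a+i)*(a+i+1) + i + 2*(i choose 2) + ((2*(a+i)+2)*c + (c choose 2)) = e + 2*(i choose 2)"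
        using triple_exponent_eq[of a i c] by (simp add: e_def b)
      then have "q ^ (2*(a+i)*(a+i+1)) * q ^ i * q ^ (2 * (i choose 2)) * q ^ ((2*(a+i)+2)*c + (c choose 2))
          = q ^ e * q ^ (2 * (i choose 2))"
        by (simp only: power_add[symmetric])
      then have "triple_term q (a+i) i c
          = (-1) ^ i * q ^ e * q ^ (2 * (i choose 2)) / (qfact (q\<^sup>2) i * qfact (q\<^sup>2) a * qfact q c)"
        unfolding triple_term_def power_minus[of q i] by (simp add: ac_simps)
      moreover have "b - 2*i = c"
        by (simp add: b)
      ultimately show ?thesis
        using True by (simp add: K_def square_coeff_def recip_coeff_def divide_inverse ac_simps)
    qed (simp add: recip_coeff_def)
  qed
  also have "{i \<in> {..b}. 2*i \<le> b} = {i. 2*i \<le> b}"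
    by auto
  finally show ?thesis .
qed

lemma triple_term_bound:
  assumes "norm q < 1" "\<And>n. norm (inverse (qfact q n)) \<le> K" "\<And>n. norm (inverse (qfact (q\<^sup>2) n)) \<le> K"
    and "i \<le> n"
  shows "norm (triple_term q n i c) \<le> K ^ 3 * norm q ^ (n + i + c)"
proof -
  define E where "E = 2*n*(n+1) + i + 2*(i choose 2) + ((2*n+2)*c + (c choose 2))"
  have "0 \<le> K"
    using order_trans[OF norm_ge_zero assms(2)] .
  have "n + i + c \<le> E"
    unfolding E_def using assms(4) by (simp add: algebra_simps)
  then have "norm q ^ E \<le> norm q ^ (n + i + c)"
    using assms(1) by (intro power_decreasing) auto
  have "norm (triple_term q n i c) = norm q ^ E *
      (norm (inverse (qfact (q\<^sup>2) i)) * norm (inverse (qfact (q\<^sup>2) (n - i))) * norm (inverse (qfact q c)))"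
    by (simp add: triple_term_def E_def norm_mult norm_divide norm_power norm_inverse power_add divide_inverse)
  also have "\<dots> \<le> norm q ^ (n + i + c) * K ^ 3"
    using assms(2,3) \<open>0 \<le> K\<close> \<open>norm q ^ E \<le> _\<close>
    by (intro mult_mono) (auto simp: power3_eq_cube intro!: mult_mono mult_nonneg_nonneg)
  finally show ?thesis
    by (simp only: mult.commute)
qed

definition triple_index :: "(nat \<times> nat \<times> nat) set" where
  "triple_index = Sigma UNIV (\<lambda>n. {..n} \<times> UNIV)"

lemma triple_term_summable:
  assumes "norm q < 1"
  shows "(\<lambda>(n, i, c). triple_term q n i c) summable_on triple_index"
proof -
  obtain K1 where K1: "\<And>n. norm (inverse (qfact q n)) \<le> K1"
    using Bseq_inverse_qfact[OF assms] unfolding Bseq_def by blast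
  have "norm (q\<^sup>2) < 1"
    using assms by (simp add: norm_power power_less_one_iff)
  then obtain K2 where K2: "\<And>n. norm (inverse (qfact (q\<^sup>2) n)) \<le> K2"
    using Bseq_inverse_qfact unfolding Bseq_def by blast
  define K where "K = max K1 K2"
  have "0 \<le> K"
    unfolding K_def using order_trans[OF norm_ge_zero K1[of 0]] by simp
  define z where "z = complex_of_real (norm q)"
  have "norm z < 1"
    using assms by (simp add: z_def)
  then have geom: "((\<lambda>k. z ^ k) has_sum 1 / (1 - z)) UNIV"
    by (intro norm_summable_imp_has_sum) (auto simp: norm_power summable_geometric geometric_sums)
  define H where "H = (\<lambda>(n, i, c). z ^ n * (z ^ i * z ^ c))"
  define G where "G x = of_real (K ^ 3) * H x" for x
  have "(H has_sum 1 / (1 - z) * (1 / (1 - z) * (1 / (1 - z)))) (UNIV \<times> UNIV \<times> UNIV)"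
    using has_sum_mult_Times[OF geom has_sum_mult_Times[OF geom geom]] by (simp add: H_def case_prod_unfold)
  then have "G summable_on UNIV \<times> UNIV \<times> UNIV"
    unfolding G_def by (intro summable_on_cmult_right has_sum_imp_summable)
  then have "(\<lambda>x. norm (G x)) summable_on triple_index"
    by (subst summable_on_iff_abs_summable_on_complex[symmetric])
       (rule summable_on_subset_banach, auto simp: triple_index_def)
  then have "(\<lambda>x. norm ((\<lambda>(n, i, c). triple_term q n i c) x)) summable_on triple_index"
  proof (rule Infinite_Sum.abs_summable_on_comparison_test)
    fix x assume "x \<in> triple_index"
    then obtain n i c where x: "x = (n, i, c)" "i \<le> n"
      by (auto simp: triple_index_def)
    have "norm (triple_term q n i c) \<le> K ^ 3 * norm q ^ (n + i + c)"
      using K1 K2 by (intro triple_term_bound[OF assms _ _ x(2)]) (auto simp: K_def le_max_iff_disj)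
    also have "\<dots> \<le> norm (G x)"
      using \<open>0 \<le> K\<close> by (simp add: G_def H_def x(1) z_def norm_mult norm_power power_add mult_ac)
    finally show "norm ((\<lambda>(n, i, c). triple_term q n i c) x) \<le> norm (G x)"
      by (simp add: x(1))
  qed
  then show ?thesis
    by (rule abs_summable_summable)
qed

definition triple_sum :: "complex \<Rightarrow> complex" where
  "triple_sum q = (\<Sum>\<^sub>\<infinity>(n, i, c)\<in>triple_index. triple_term q n i c)"

lemma triple_term_has_sum:
  "norm q < 1 \<Longrightarrow> ((\<lambda>(n, i, c). triple_term q n i c) has_sum triple_sum q) triple_index"
  unfolding triple_sum_def by (rule has_sum_infsum[OF triple_term_summable])

lemma series_term_has_sum_triple_sum:
  assumes "norm q < 1"
  shows "(series_term q has_sum triple_sum q) UNIV"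
proof (rule has_sum_SigmaD[OF triple_term_has_sum[OF assms, unfolded triple_index_def]])
  show "((\<lambda>y. (\<lambda>(n, i, c). triple_term q n i c) (n, y)) has_sum series_term q n) ({..n} \<times> UNIV)" for n
    using series_term_has_sum[OF assms, of n] by (simp add: case_prod_beta')
qed

lemma block_term_has_sum_triple_sum:
  assumes "norm q < 1"
  shows "((\<lambda>(a, b). block_term q a b) has_sum triple_sum q) UNIV"
proof -
  have "((\<lambda>(n, i, c). triple_term q n i c) has_sum triple_sum q) triple_index
      \<longleftrightarrow> ((\<lambda>((a, b), i). triple_term q (a+i) i (b - 2*i)) has_sum triple_sum q)
            (Sigma UNIV (\<lambda>(a, b). {i. 2*i \<le> b}))"
    by (rule has_sum_reindex_bij_witness[where j = "\<lambda>(n, i, c). ((n - i, c + 2*i), i)"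
          and i = "\<lambda>((a, b), i). (a+i, i, b - 2*i)"]) (auto simp: triple_index_def)
  with triple_term_has_sum[OF assms]
  have "((\<lambda>((a, b), i). triple_term q (a+i) i (b - 2*i)) has_sum triple_sum q)
      (Sigma UNIV (\<lambda>(a, b). {i. 2*i \<le> b}))" by blast
  then show ?thesis
  proof (rule has_sum_SigmaD)
    fix ab :: "nat \<times> nat"
    obtain a b where ab: "ab = (a, b)"
      by fastforce
    have "finite {i. 2*i \<le> b}"
      by (rule finite_subset[of _ "{..b}"]) auto
    then show "((\<lambda>i. (\<lambda>((a, b), i). triple_term q (a+i) i (b - 2*i)) (ab, i)) has_sum (\<lambda>(a, b). block_term q a b) ab)
        ((\<lambda>(a, b). {i. 2*i \<le> b}) ab)"
      by (simp add: ab block_term_eq_sum[OF assms] has_sum_finiteI)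
  qed
qed

section \<open>Generating functions of weighted sets\<close>

definition has_gf :: "'x set \<Rightarrow> ('x \<Rightarrow> nat) \<Rightarrow> (complex \<Rightarrow> complex) \<Rightarrow> bool" where
  "has_gf A w G \<longleftrightarrow> (\<forall>q::complex. norm q < 1 \<longrightarrow> ((\<lambda>x. q ^ w x) has_sum G q) A)"

lemma has_gf_reindex:
  assumes "has_gf A (\<lambda>x. w (h x)) G" "inj_on h A"
  shows "has_gf (h ` A) w G"
  unfolding has_gf_def
proof (intro allI impI)
  fix q :: complex assume "norm q < 1"
  then have "((\<lambda>x. q ^ w (h x)) has_sum G q) A"
    using assms(1) by (simp add: has_gf_def)
  then show "((\<lambda>x. q ^ w x) has_sum G q) (h ` A)"
    using has_sum_reindex[OF assms(2), of "\<lambda>x. q ^ w x"] by (simp add: o_def)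
qed

lemma has_gf_cong:
  assumes "has_gf A w G" "\<And>x. x \<in> A \<Longrightarrow> w x = w' x" "\<And>q. norm q < 1 \<Longrightarrow> G q = G' q"
  shows "has_gf A w' G'"
  unfolding has_gf_def
proof (intro allI impI)
  fix q :: complex assume q: "norm q < 1"
  have "((\<lambda>x. q ^ w x) has_sum G q) A"
    using assms(1) q by (simp add: has_gf_def)
  moreover have "((\<lambda>x. q ^ w x) has_sum G q) A \<longleftrightarrow> ((\<lambda>x. q ^ w' x) has_sum G q) A"
    by (rule has_sum_cong) (simp add: assms(2))
  ultimately show "((\<lambda>x. q ^ w' x) has_sum G' q) A"
    using assms(3)[OF q] by simp
qed

lemma has_gf_shift:
  assumes "has_gf A w G"
  shows "has_gf A (\<lambda>x. k + w x) (\<lambda>q. q ^ k * G q)"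
  unfolding has_gf_def
proof (intro allI impI)
  fix q :: complex assume "norm q < 1"
  then have "((\<lambda>x. q ^ w x) has_sum G q) A"
    using assms by (simp add: has_gf_def)
  from has_sum_cmult_right[OF this, of "q ^ k"]
  show "((\<lambda>x. q ^ (k + w x)) has_sum q ^ k * G q) A"
    by (simp add: power_add)
qed

text \<open>Summability over \<open>Sigma A B\<close> comes for free: at \<open>|q|\<close> all terms are nonnegative.\<close>
lemma has_gf_Sigma:
  assumes inner: "\<And>x. x \<in> A \<Longrightarrow> has_gf (B x) (\<lambda>y. w (x, y)) (H x)"
    and outer: "\<And>q. norm q < 1 \<Longrightarrow> ((\<lambda>x. H x q) has_sum K q) A"
  shows "has_gf (Sigma A B) w K"
  unfolding has_gf_def
proof (intro allI impI)
  fix q :: complex assume q: "norm q < 1"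
  define r where "r = complex_of_real (norm q)"
  have r: "norm r < 1"
    using q by (simp add: r_def)
  have "((\<lambda>y. norm q ^ w (x, y)) has_sum Re (H x r)) (B x)" if "x \<in> A" for x
  proof -
    have "((\<lambda>y. r ^ w (x, y)) has_sum H x r) (B x)"
      using inner[OF that] r by (simp add: has_gf_def)
    from has_sum_Re[OF this] show ?thesis
      by (simp add: r_def)
  qed
  moreover have "(\<lambda>x. Re (H x r)) summable_on A"
    using has_sum_Re[OF outer[OF r]] by (rule has_sum_imp_summable)
  ultimately have "(\<lambda>z. norm q ^ w z) summable_on Sigma A B"
    by (rule summable_on_SigmaI) auto
  then have "(\<lambda>z. norm (q ^ w z)) summable_on Sigma A B"
    by (simp add: norm_power)
  then have summable: "(\<lambda>z. q ^ w z) summable_on Sigma A B"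
    by (rule abs_summable_summable)
  show "((\<lambda>z. q ^ w z) has_sum K q) (Sigma A B)"
  proof (rule has_sum_SigmaI[OF _ outer[OF q] summable])
    show "((\<lambda>y. q ^ w (x, y)) has_sum H x q) (B x)" if "x \<in> A" for x
      using inner[OF that] q by (simp add: has_gf_def)
  qed
qed

lemma has_sum_geometric_from:
  fixes z :: complex
  assumes "norm z < 1"
  shows "((\<lambda>n. z ^ n) has_sum z ^ k / (1 - z)) {k..}"
proof -
  have "((\<lambda>j. z ^ k * z ^ j) has_sum z ^ k * (1 / (1 - z))) UNIV"
    using assms by (intro has_sum_cmult_right norm_summable_imp_has_sum)
      (auto simp: norm_power summable_geometric geometric_sums)
  then have "((\<lambda>n. z ^ n) \<circ> (\<lambda>j. j + k) has_sum z ^ k / (1 - z)) UNIV"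
    by (simp add: o_def power_add mult.commute)
  moreover have "bij_betw (\<lambda>j. j + k) UNIV {k..}"
    by (rule bij_betwI[where g = "\<lambda>n. n - k"]) auto
  ultimately show ?thesis
    using has_sum_reindex[of "\<lambda>j. j + k" UNIV "\<lambda>n. z ^ n"] by (simp add: bij_betw_def)
qed

section \<open>Sets without consecutive elements\<close>

definition sparse_sets :: "nat \<Rightarrow> nat \<Rightarrow> nat set set" where
  "sparse_sets b m = {X. finite X \<and> card X = b \<and> (\<forall>x\<in>X. m < x) \<and> (\<forall>j. \<not> (j \<in> X \<and> Suc j \<in> X))}"

lemma sparse_sets_0: "sparse_sets 0 m = {{}}"
  by (auto simp: sparse_sets_def)

lemma sparse_sets_Suc:
  "sparse_sets (Suc b) m = (\<lambda>(y, Z). insert y Z) ` (SIGMA y:{m<..}. sparse_sets b (Suc y))"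
proof (intro equalityI subsetI)
  fix X assume X: "X \<in> sparse_sets (Suc b) m"
  then have "finite X" "X \<noteq> {}"
    by (auto simp: sparse_sets_def)
  define y where "y = Min X"
  have y: "y \<in> X" "\<And>x. x \<in> X \<Longrightarrow> y \<le> x"
    using \<open>finite X\<close> \<open>X \<noteq> {}\<close> by (simp_all add: y_def)
  moreover have "Suc y \<notin> X"
    using X y(1) by (auto simp: sparse_sets_def)
  then have "Suc y < x" if "x \<in> X - {y}" for x
    using that y(2)[of x] by (metis DiffE insertI1 le_neq_implies_less Suc_lessI)
  ultimately have "X - {y} \<in> sparse_sets b (Suc y)" and "m < y"
    using X by (auto simp: sparse_sets_def)
  then show "X \<in> (\<lambda>(y, Z). insert y Z) ` (SIGMA y:{m<..}. sparse_sets b (Suc y))"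
    using y(1) by (intro image_eqI[of _ _ "(y, X - {y})"]) auto
next
  fix X assume "X \<in> (\<lambda>(y, Z). insert y Z) ` (SIGMA y:{m<..}. sparse_sets b (Suc y))"
  then obtain y Z where X: "X = insert y Z" and "m < y" "finite Z" "card Z = b"
    and Z_gt: "\<And>x. x \<in> Z \<Longrightarrow> Suc y < x" and Z_sparse: "\<And>j. j \<in> Z \<Longrightarrow> Suc j \<notin> Z"
    by (auto simp: sparse_sets_def)
  have "y \<notin> Z"
    using Z_gt by force
  moreover have "\<not> (j \<in> X \<and> Suc j \<in> X)" for j
    using Z_gt[of j] Z_gt[of "Suc j"] Z_sparse[of j] by (auto simp: X)
  moreover have "m < x" if "x \<in> Z" for x
    using Z_gt[OF that] \<open>m < y\<close> by simp
  ultimately show "X \<in> sparse_sets (Suc b) m"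
    using \<open>m < y\<close> \<open>finite Z\<close> \<open>card Z = b\<close> by (auto simp: sparse_sets_def X)
qed

lemma inj_on_insert_sparse_sets:
  "inj_on (\<lambda>(y, Z). insert y Z) (SIGMA y:{m<..}. sparse_sets b (Suc y))"
proof (rule inj_onI, clarify)
  fix y Z y' Z'
  assume "Z \<in> sparse_sets b (Suc y)" "Z' \<in> sparse_sets b (Suc y')" and eq: "insert y Z = insert y' Z'"
  then have gt: "\<forall>x\<in>Z. y < x" "\<forall>x\<in>Z'. y' < x"
    by (auto simp: sparse_sets_def)
  have "y = y'"
  proof (rule ccontr)
    assume "y \<noteq> y'"
    then have "y \<in> Z'" "y' \<in> Z"
      using eq by (metis insertE insertI1)+
    then show False
      using gt by force
  qed
  moreover have "y \<notin> Z" "y' \<notin> Z'"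
    using gt by auto
  ultimately show "y = y' \<and> Z = Z'"
    using eq by (metis insert_ident)
qed

lemma has_sum_sparse_sets_step:
  assumes "norm q < 1"
  shows "((\<lambda>y. q ^ y * (q ^ (b*(b+Suc y)) / qfact q b)) has_sum q ^ (Suc b*(Suc b+m)) / qfact q (Suc b)) {m<..}"
proof -
  have "norm (q ^ Suc b) < 1"
    using assms by (simp add: norm_power power_less_one_iff del: power_Suc)
  from has_sum_cmult_right[OF has_sum_geometric_from[OF this, of "Suc m"], of "q ^ (b*(b+1)) / qfact q b"]
  have geom: "((\<lambda>y. q ^ (b*(b+1)) / qfact q b * (q ^ Suc b) ^ y)
      has_sum q ^ (b*(b+1)) / qfact q b * ((q ^ Suc b) ^ Suc m / (1 - q ^ Suc b))) {Suc m..}" .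
  have summand: "q ^ y * (q ^ (b*(b+Suc y)) / qfact q b) = q ^ (b*(b+1)) / qfact q b * (q ^ Suc b) ^ y" for y
  proof -
    have "y + b*(b + Suc y) = b*(b+1) + Suc b * y"
      by (simp add: algebra_simps)
    then show ?thesis
      by (metis power_add power_mult times_divide_eq_left times_divide_eq_right)
  qed
  have total: "q ^ (b*(b+1)) / qfact q b * ((q ^ Suc b) ^ Suc m / (1 - q ^ Suc b))
      = q ^ (Suc b*(Suc b+m)) / qfact q (Suc b)"
  proof -
    have "b*(b+1) + Suc b * Suc m = Suc b*(Suc b+m)"
      by (simp add: algebra_simps)
    then have "q ^ (b*(b+1)) * (q ^ Suc b) ^ Suc m = q ^ (Suc b*(Suc b+m))"
      by (metis power_add power_mult)
    then show ?thesis
      by (simp add: qfact_Suc del: power_Suc)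
  qed
  have "{m<..} = {Suc m..}"
    by auto
  then show ?thesis
    using geom unfolding summand total by simp
qed

lemma sparse_sets_has_gf: "has_gf (sparse_sets b m) (\<lambda>X. \<Sum>X) (\<lambda>q. q ^ (b*(b+m)) / qfact q b)"
proof (induction b arbitrary: m)
  case 0
  show ?case
    unfolding has_gf_def sparse_sets_0 by (intro allI impI has_sum_finiteI) auto
next
  case (Suc b)
  define A where "A = (SIGMA y:{m<..}. sparse_sets b (Suc y))"
  have "has_gf (sparse_sets b (Suc y)) (\<lambda>Z. (\<lambda>(y, Z). y + \<Sum>Z) (y, Z))
      (\<lambda>q. q ^ y * (q ^ (b*(b+Suc y)) / qfact q b))" for y
    using has_gf_shift[OF Suc.IH[of "Suc y"], of y] by simp
  then have "has_gf A (\<lambda>(y, Z). y + \<Sum>Z) (\<lambda>q. q ^ (Suc b*(Suc b+m)) / qfact q (Suc b))"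
    unfolding A_def by (rule has_gf_Sigma[OF _ has_sum_sparse_sets_step])
  then have "has_gf A (\<lambda>x. \<Sum>((\<lambda>(y, Z). insert y Z) x)) (\<lambda>q. q ^ (Suc b*(Suc b+m)) / qfact q (Suc b))"
  proof (rule has_gf_cong)
    fix x assume "x \<in> A"
    then obtain y Z where "x = (y, Z)" "finite Z" "y \<notin> Z"
      by (force simp: A_def sparse_sets_def)
    then show "(\<lambda>(y, Z). y + \<Sum>Z) x = \<Sum>((\<lambda>(y, Z). insert y Z) x)"
      by simp
  qed simp
  then show ?case
    unfolding sparse_sets_Suc A_def[symmetric] by (rule has_gf_reindex) (simp add: A_def inj_on_insert_sparse_sets)
qed

section \<open>Multisets of doubled even parts\<close>

definition even_blocks :: "nat \<Rightarrow> nat multiset set" where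
  "even_blocks a = {B. (\<forall>x\<in>#B. \<exists>i. 1 \<le> i \<and> i \<le> a \<and> x = 2*i) \<and> (\<forall>i. 1 \<le> i \<and> i \<le> a \<longrightarrow> 2 \<le> count B (2*i))}"

lemma even_blocks_memberD: "B \<in> even_blocks a \<Longrightarrow> y \<in># B \<Longrightarrow> \<exists>i. 1 \<le> i \<and> i \<le> a \<and> y = 2*i"
  by (auto simp: even_blocks_def)

lemma count_even_blocks_ge_2: "B \<in> even_blocks a \<Longrightarrow> 1 \<le> i \<Longrightarrow> i \<le> a \<Longrightarrow> 2 \<le> count B (2*i)"
  by (simp add: even_blocks_def)

lemma count_even_blocks_eq_0: "B \<in> even_blocks a \<Longrightarrow> odd y \<or> 2*a < y \<or> y = 0 \<Longrightarrow> count B y = 0"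
  using even_blocks_memberD[of B a y] by (auto simp: not_in_iff[symmetric])

lemma even_blocks_0: "even_blocks 0 = {{#}}"
  by (auto simp: even_blocks_def)

lemma even_blocks_Suc:
  "even_blocks (Suc a) = (\<lambda>(B, m). B + replicate_mset m (2 * Suc a)) ` (even_blocks a \<times> {2..})"
proof (intro equalityI subsetI)
  fix M assume M: "M \<in> even_blocks (Suc a)"
  define B where "B = filter_mset (\<lambda>y. y \<noteq> 2 * Suc a) M"
  have "M = B + replicate_mset (count M (2 * Suc a)) (2 * Suc a)"
    by (rule multiset_eqI) (auto simp: B_def)
  moreover have "2 \<le> count M (2 * Suc a)"
    using count_even_blocks_ge_2[OF M, of "Suc a"] by simp
  moreover have "\<exists>i. 1 \<le> i \<and> i \<le> a \<and> y = 2*i" if "y \<in># B" for y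
  proof -
    have "y \<in># M"
      using that by (simp add: B_def)
    then obtain i where "1 \<le> i" "i \<le> Suc a" "y = 2*i"
      using even_blocks_memberD[OF M] by blast
    moreover have "i \<noteq> Suc a"
      using that \<open>y = 2*i\<close> by (auto simp: B_def)
    ultimately show ?thesis
      by auto
  qed
  moreover have "2 \<le> count B (2*i)" if "1 \<le> i" "i \<le> a" for i
    using that count_even_blocks_ge_2[OF M, of i] by (simp add: B_def)
  ultimately show "M \<in> (\<lambda>(B, m). B + replicate_mset m (2 * Suc a)) ` (even_blocks a \<times> {2..})"
    by (intro image_eqI[of _ _ "(B, count M (2 * Suc a))"]) (auto simp: even_blocks_def)
next
  fix M assume "M \<in> (\<lambda>(B, m). B + replicate_mset m (2 * Suc a)) ` (even_blocks a \<times> {2..})"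
  then obtain B m where M: "M = B + replicate_mset m (2 * Suc a)" and B: "B \<in> even_blocks a" and "2 \<le> m"
    by auto
  have "\<exists>i. 1 \<le> i \<and> i \<le> Suc a \<and> y = 2*i" if "y \<in># M" for y
  proof (cases "y \<in># B")
    case True
    then show ?thesis
      using even_blocks_memberD[OF B] le_SucI by blast
  next
    case False
    then show ?thesis
      using that by (auto simp: M split: if_splits)
  qed
  moreover have "2 \<le> count M (2*i)" if "1 \<le> i" "i \<le> Suc a" for i
    using that \<open>2 \<le> m\<close> count_even_blocks_ge_2[OF B, of i] by (cases "i = Suc a") (auto simp: M)
  ultimately show "M \<in> even_blocks (Suc a)"
    by (auto simp: even_blocks_def)
qed

lemma inj_on_add_replicate_even_blocks:
  "inj_on (\<lambda>(B, m). B + replicate_mset m (2 * Suc a)) (even_blocks a \<times> {2..})"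
proof (rule inj_onI, clarify)
  fix B m B' m'
  assume B: "B \<in> even_blocks a" "B' \<in> even_blocks a"
    and eq: "B + replicate_mset m (2 * Suc a) = B' + replicate_mset m' (2 * Suc a)"
  then have "count (B + replicate_mset m (2 * Suc a)) (2 * Suc a) = count (B' + replicate_mset m' (2 * Suc a)) (2 * Suc a)"
    by simp
  then have "m = m'"
    using count_even_blocks_eq_0[OF B(1), of "2 * Suc a"] count_even_blocks_eq_0[OF B(2), of "2 * Suc a"] by simp
  then show "B = B' \<and> m = m'"
    using eq by simp
qed

lemma multiplicity_at_least_2_has_gf:
  assumes "0 < k"
  shows "has_gf {2..} (\<lambda>m. k * m) (\<lambda>q. (q ^ k)\<^sup>2 / (1 - q ^ k))"
  unfolding has_gf_def
proof (intro allI impI)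
  fix q :: complex assume "norm q < 1"
  then have "norm (q ^ k) < 1"
    using assms by (rule norm_power_less_one)
  from has_sum_geometric_from[OF this, of 2]
  show "((\<lambda>m. q ^ (k * m)) has_sum (q ^ k)\<^sup>2 / (1 - q ^ k)) {2..}"
    by (simp add: power_mult)
qed

lemma even_blocks_has_gf: "has_gf (even_blocks a) sum_mset (\<lambda>q. q ^ (2*a*(a+1)) / qfact (q\<^sup>2) a)"
proof (induction a)
  case 0
  show ?case
    unfolding has_gf_def even_blocks_0 by (intro allI impI has_sum_finiteI) auto
next
  case (Suc a)
  define k where "k = 2 * Suc a"
  define c where "c q = (q ^ k)\<^sup>2 / (1 - q ^ k)" for q :: complex
  have "has_gf {2..} (\<lambda>m. (\<lambda>(B, m). sum_mset B + k * m) (B, m)) (\<lambda>q. q ^ sum_mset B * c q)" for B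
    using has_gf_shift[OF multiplicity_at_least_2_has_gf, of k "sum_mset B"] by (simp add: k_def c_def)
  moreover have "((\<lambda>B. q ^ sum_mset B * c q) has_sum q ^ (2*a*(a+1)) / qfact (q\<^sup>2) a * c q) (even_blocks a)"
    if "norm q < 1" for q
    using Suc.IH that by (intro has_sum_cmult_left) (simp add: has_gf_def)
  ultimately have "has_gf (even_blocks a \<times> {2..}) (\<lambda>(B, m). sum_mset B + k * m)
      (\<lambda>q. q ^ (2*a*(a+1)) / qfact (q\<^sup>2) a * c q)"
    by (rule has_gf_Sigma)
  then have "has_gf (even_blocks a \<times> {2..}) (\<lambda>y. sum_mset ((\<lambda>(B, m). B + replicate_mset m k) y))
      (\<lambda>q. q ^ (2 * Suc a * (Suc a + 1)) / qfact (q\<^sup>2) (Suc a))"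
  proof (rule has_gf_cong)
    show "(\<lambda>(B, m). sum_mset B + k * m) y = sum_mset ((\<lambda>(B, m). B + replicate_mset m k) y)" for y
      by (cases y) (simp add: mult.commute)
  next
    fix q :: complex assume "norm q < 1"
    have exponent: "2 * Suc a * (Suc a + 1) = 2*a*(a+1) + k * 2"
      by (simp add: k_def algebra_simps)
    have "qfact (q\<^sup>2) (Suc a) = qfact (q\<^sup>2) a * (1 - q ^ k)"
      by (simp only: qfact_Suc k_def power_mult)
    then show "q ^ (2*a*(a+1)) / qfact (q\<^sup>2) a * c q = q ^ (2 * Suc a * (Suc a + 1)) / qfact (q\<^sup>2) (Suc a)"
      unfolding c_def exponent power_add power_mult by simp
  qed
  then show ?case
    unfolding even_blocks_Suc[of a, folded k_def]
    by (rule has_gf_reindex[OF _ inj_on_add_replicate_even_blocks[of a, folded k_def]])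
qed

section \<open>Decomposing the partitions counted by \<open>T\<close>\<close>

lemma finite_R1_candidates: "finite {j. 2 \<le> count M j}"
  by (rule finite_subset[of _ "set_mset M"]) (auto simp flip: count_greater_zero_iff)

lemma R1_ge: "2 \<le> count M j \<Longrightarrow> j \<le> R1 M"
  unfolding R1_def using finite_R1_candidates by (intro Max_ge) auto

lemma count_R1: "R1 M \<noteq> 0 \<Longrightarrow> 2 \<le> count M (R1 M)"
  using Max_in[of "{j. 2 \<le> count M j} \<union> {0}"] finite_R1_candidates by (auto simp: R1_def)

lemma R1_eqI:
  assumes "\<And>j. 2 \<le> count M j \<Longrightarrow> j \<le> r" and "r = 0 \<or> 2 \<le> count M r"
  shows "R1 M = r"
  unfolding R1_def using assms finite_R1_candidates by (intro Max_eqI) auto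

lemma count_le_one_above_R1: "R1 M < y \<Longrightarrow> count M y \<le> 1"
  using R1_ge[of M y] by linarith

text \<open>Parts above \<open>R\<^sub>1\<close> occur at most once, so they form a set.\<close>
lemma split_at_R1: "M = filter_mset (\<lambda>y. y \<le> R1 M) M + mset_set {y. y \<in># M \<and> R1 M < y}"
proof (rule multiset_eqI)
  fix y
  have "finite {y. y \<in># M \<and> R1 M < y}"
    by (rule finite_subset[of _ "set_mset M"]) auto
  moreover have "R1 M < y \<Longrightarrow> count M y = (if y \<in># M then 1 else 0)"
    using count_le_one_above_R1[of M y] by (auto simp: not_in_iff simp flip: count_greater_zero_iff)
  ultimately show "count M y = count (filter_mset (\<lambda>y. y \<le> R1 M) M + mset_set {y. y \<in># M \<and> R1 M < y}) y"
    by (auto simp: count_mset_set')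
qed

definition T_partitions :: "nat multiset set" where
  "T_partitions = {M. (\<forall>x\<in>#M. 0 < x) \<and> T_cond M}"

lemma even_R1_T_partition:
  assumes "M \<in> T_partitions"
  shows "even (R1 M)"
proof (rule ccontr)
  assume "odd (R1 M)"
  then have "2 \<le> count M (R1 M)"
    by (intro count_R1) (auto elim: oddE)
  moreover have "count M (R1 M) \<le> 1"
    using assms \<open>odd (R1 M)\<close> by (simp add: T_partitions_def T_cond_def)
  ultimately show False
    by simp
qed

lemma T_partition_low_part:
  assumes M: "M \<in> T_partitions" and a: "R1 M = 2*a"
  shows "filter_mset (\<lambda>y. y \<le> 2*a) M \<in> even_blocks a"
proof -
  have pos: "\<And>y. y \<in># M \<Longrightarrow> 0 < y"
    and odd: "\<And>j. odd j \<Longrightarrow> j < 2*a + 2 \<Longrightarrow> count M j = 0"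
    and even: "\<And>j. even j \<Longrightarrow> 0 < j \<Longrightarrow> j < 2*a \<Longrightarrow> 2 \<le> count M j"
    using M a by (auto simp: T_partitions_def T_cond_def)
  have "\<exists>i. 1 \<le> i \<and> i \<le> a \<and> y = 2*i" if "y \<in># M" "y \<le> 2*a" for y
  proof -
    have "even y"
      using odd[of y] that by (auto simp flip: count_greater_zero_iff)
    then show ?thesis
      using pos[OF that(1)] that(2) by (auto elim!: evenE)
  qed
  moreover have "2 \<le> count M (2*i)" if "1 \<le> i" "i \<le> a" for i
    using even[of "2*i"] count_R1[of M] a that by (cases "i = a") auto
  ultimately show ?thesis
    by (auto simp: even_blocks_def)
qed

lemma T_partition_high_part:
  assumes M: "M \<in> T_partitions" and a: "R1 M = 2*a"
  defines "X \<equiv> {y. y \<in># M \<and> 2*a < y}"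
  shows "X \<in> sparse_sets (card X) (2*a+1)"
proof -
  have "finite X"
    unfolding X_def by (rule finite_subset[of _ "set_mset M"]) auto
  moreover have "count M (2*a + 1) = 0"
    using M a by (simp add: T_partitions_def T_cond_def)
  moreover have "\<not> (j \<in># M \<and> Suc j \<in># M)" for j
    using M by (simp add: T_partitions_def T_cond_def)
  ultimately have "2*a + 1 < y" if "y \<in> X" for y
    using that by (simp add: X_def not_in_iff[symmetric]) (metis Suc_lessI)
  then show ?thesis
    using \<open>finite X\<close> \<open>\<And>j. \<not> (j \<in># M \<and> Suc j \<in># M)\<close> by (auto simp: sparse_sets_def X_def)
qed

lemma count_add_mset_set: "finite X \<Longrightarrow> count (B + mset_set X) y = count B y + (if y \<in> X then 1 else 0)"
  by (simp add: count_mset_set')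

lemma R1_block_pair:
  assumes B: "B \<in> even_blocks a" and X: "X \<in> sparse_sets b (2*a+1)"
  shows "R1 (B + mset_set X) = 2*a"
proof (rule R1_eqI)
  have "finite X"
    using X by (simp add: sparse_sets_def)
  show "j \<le> 2*a" if "2 \<le> count (B + mset_set X) j" for j
  proof (rule ccontr)
    assume "\<not> j \<le> 2*a"
    then have "count B j = 0"
      using count_even_blocks_eq_0[OF B, of j] by simp
    moreover have "count (mset_set X) j \<le> 1"
      by (simp add: count_mset_set')
    ultimately show False
      using that by simp
  qed
  show "2*a = 0 \<or> 2 \<le> count (B + mset_set X) (2*a)"
    using count_even_blocks_ge_2[OF B, of a] by (cases "a = 0") auto
qed

lemma block_pair_in_T_partitions:
  assumes B: "B \<in> even_blocks a" and X: "X \<in> sparse_sets b (2*a+1)"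
  shows "B + mset_set X \<in> T_partitions"
proof -
  have X_gt: "\<And>y. y \<in> X \<Longrightarrow> 2*a + 1 < y" and "finite X"
    and X_sparse: "\<And>j. j \<in> X \<Longrightarrow> Suc j \<notin> X"
    using X by (auto simp: sparse_sets_def)
  have B_even: "\<And>y. y \<in># B \<Longrightarrow> \<exists>i. 1 \<le> i \<and> i \<le> a \<and> y = 2*i"
    using even_blocks_memberD[OF B] .
  note count = count_add_mset_set[OF \<open>finite X\<close>, of B] count_even_blocks_eq_0[OF B]
  have "0 < y" if "y \<in># B + mset_set X" for y
    using that B_even[of y] X_gt[of y] \<open>finite X\<close> by auto
  moreover have "odd j \<Longrightarrow> count (B + mset_set X) j \<le> 1" for j
    using count by simp
  moreover have "odd j \<Longrightarrow> j < 2*a + 2 \<Longrightarrow> count (B + mset_set X) j = 0" for j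
    using count X_gt[of j] by auto
  moreover have "2 \<le> count (B + mset_set X) j" if "even j" "0 < j" "j < 2*a" for j
  proof -
    obtain i where "j = 2*i"
      using \<open>even j\<close> by (auto elim: evenE)
    moreover have "1 \<le> i" "i \<le> a"
      using that \<open>j = 2*i\<close> by auto
    ultimately show ?thesis
      using count_even_blocks_ge_2[OF B, of i] by simp
  qed
  moreover have "\<not> (j \<in># B + mset_set X \<and> Suc j \<in># B + mset_set X)" for j
  proof
    assume "j \<in># B + mset_set X \<and> Suc j \<in># B + mset_set X"
    then consider "j \<in># B" "Suc j \<in># B" | "j \<in># B" "Suc j \<in> X" | "j \<in> X" "Suc j \<in># B" | "j \<in> X" "Suc j \<in> X"
      using \<open>finite X\<close> by auto
    then show False
    proof cases
      case 1
      obtain i i' where "j = 2*i" "Suc j = 2*i'"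
        using B_even[OF 1(1)] B_even[OF 1(2)] by blast
      then show ?thesis
        by presburger
    next
      case 2
      obtain i where "j = 2*i" "i \<le> a"
        using B_even[OF 2(1)] by blast
      then show ?thesis
        using X_gt[OF 2(2)] by simp
    next
      case 3
      obtain i where "Suc j = 2*i" "i \<le> a"
        using B_even[OF 3(2)] by blast
      then show ?thesis
        using X_gt[OF 3(1)] by simp
    next
      case 4
      then show ?thesis
        using X_sparse by blast
    qed
  qed
  ultimately show ?thesis
    unfolding T_partitions_def T_cond_def R1_block_pair[OF B X] mem_Collect_eq
    by (intro conjI allI impI ballI) auto
qed

lemma block_pair_recover:
  assumes B: "B \<in> even_blocks a" and X: "X \<in> sparse_sets b (2*a+1)"
  shows "filter_mset (\<lambda>y. y \<le> 2*a) (B + mset_set X) = B" and "{y. y \<in># B + mset_set X \<and> 2*a < y} = X"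
proof -
  have "finite X" and X_gt: "\<And>y. y \<in> X \<Longrightarrow> 2*a + 1 < y"
    using X by (auto simp: sparse_sets_def)
  have B_le: "\<And>y. y \<in># B \<Longrightarrow> y \<le> 2*a"
    using even_blocks_memberD[OF B] by fastforce
  have "{y \<in> X. y \<le> 2*a} = {}"
    using X_gt by force
  moreover have "filter_mset (\<lambda>y. y \<le> 2*a) B = B"
    using B_le by (simp add: filter_mset_eq_conv)
  ultimately show "filter_mset (\<lambda>y. y \<le> 2*a) (B + mset_set X) = B"
    using \<open>finite X\<close> by (simp only: filter_union_mset filter_mset_mset_set) simp
  show "{y. y \<in># B + mset_set X \<and> 2*a < y} = X"
    using B_le X_gt \<open>finite X\<close> by force
qed

definition T_data :: "((nat \<times> nat) \<times> nat multiset \<times> nat set) set" where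
  "T_data = (SIGMA (a, b):UNIV. even_blocks a \<times> sparse_sets b (2*a+1))"

definition assemble :: "(nat \<times> nat) \<times> nat multiset \<times> nat set \<Rightarrow> nat multiset" where
  "assemble = (\<lambda>(_, B, X). B + mset_set X)"

lemma inj_on_assemble: "inj_on assemble T_data"
proof (rule inj_onI)
  fix x x' assume "x \<in> T_data" "x' \<in> T_data" and eq: "assemble x = assemble x'"
  then obtain a b B X a' b' B' X' where x: "x = ((a, b), B, X)" "x' = ((a', b'), B', X')"
    and B: "B \<in> even_blocks a" "B' \<in> even_blocks a'"
    and X: "X \<in> sparse_sets b (2*a+1)" "X' \<in> sparse_sets b' (2*a'+1)"
    by (auto simp: T_data_def)
  have M: "B + mset_set X = B' + mset_set X'"
    using eq by (simp add: x assemble_def)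
  then have "a = a'"
    using R1_block_pair[OF B(1) X(1)] R1_block_pair[OF B(2) X(2)] by simp
  then have "B = B'" "X = X'"
    using block_pair_recover[OF B(1) X(1)] block_pair_recover[OF B(2) X(2)] M by metis+
  moreover have "b = b'"
    using X \<open>X = X'\<close> by (simp add: sparse_sets_def)
  ultimately show "x = x'"
    using \<open>a = a'\<close> by (simp add: x)
qed

lemma T_partitions_eq_image: "T_partitions = assemble ` T_data"
proof
  show "assemble ` T_data \<subseteq> T_partitions"
    using block_pair_in_T_partitions by (auto simp: T_data_def assemble_def)
  show "T_partitions \<subseteq> assemble ` T_data"
  proof
    fix M assume M: "M \<in> T_partitions"
    define a where "a = R1 M div 2"
    have a: "R1 M = 2*a"
      using even_R1_T_partition[OF M] by (simp add: a_def)
    define X where "X = {y. y \<in># M \<and> 2*a < y}"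
    have "((a, card X), filter_mset (\<lambda>y. y \<le> 2*a) M, X) \<in> T_data"
      using T_partition_low_part[OF M a] T_partition_high_part[OF M a] by (simp add: T_data_def X_def)
    moreover have "M = assemble ((a, card X), filter_mset (\<lambda>y. y \<le> 2*a) M, X)"
      using split_at_R1[of M] by (simp add: assemble_def a X_def)
    ultimately show "M \<in> assemble ` T_data"
      by blast
  qed
qed

lemma block_pair_has_gf:
  "has_gf (even_blocks a \<times> sparse_sets b (2*a+1)) (\<lambda>(B, X). sum_mset B + \<Sum>X) (\<lambda>q. block_term q a b)"
proof -
  define G where "G q = q ^ (b*(b+(2*a+1))) / qfact q b" for q :: complex
  have "has_gf (sparse_sets b (2*a+1)) (\<lambda>X. sum_mset B + \<Sum>X) (\<lambda>q. q ^ sum_mset B * G q)" for B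
    unfolding G_def by (rule has_gf_shift[OF sparse_sets_has_gf])
  moreover have "((\<lambda>B. q ^ sum_mset B * G q) has_sum q ^ (2*a*(a+1)) / qfact (q\<^sup>2) a * G q) (even_blocks a)"
    if "norm q < 1" for q
    using even_blocks_has_gf[of a] that by (intro has_sum_cmult_left) (simp add: has_gf_def)
  ultimately have "has_gf (even_blocks a \<times> sparse_sets b (2*a+1)) (\<lambda>(B, X). sum_mset B + \<Sum>X)
      (\<lambda>q. q ^ (2*a*(a+1)) / qfact (q\<^sup>2) a * G q)"
    by (intro has_gf_Sigma) auto
  then show ?thesis
    by (rule has_gf_cong) (auto simp: block_term_def G_def add.assoc)
qed

lemma T_partitions_has_gf: "has_gf T_partitions sum_mset triple_sum"
proof -
  have "has_gf T_data (\<lambda>((a, b), B, X). sum_mset B + \<Sum>X) triple_sum"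
    unfolding T_data_def
  proof (rule has_gf_Sigma)
    show "has_gf ((\<lambda>(a, b). even_blocks a \<times> sparse_sets b (2*a+1)) ab)
        (\<lambda>y. (\<lambda>((a, b), B, X). sum_mset B + \<Sum>X) (ab, y)) (\<lambda>q. (\<lambda>(a, b). block_term q a b) ab)" for ab
      using block_pair_has_gf by (simp add: case_prod_beta')
    show "((\<lambda>ab. (\<lambda>(a, b). block_term q a b) ab) has_sum triple_sum q) UNIV" if "norm q < 1" for q
      using block_term_has_sum_triple_sum[OF that] .
  qed
  then have "has_gf T_data (\<lambda>x. sum_mset (assemble x)) triple_sum"
    by (rule has_gf_cong) (auto simp: T_data_def assemble_def sparse_sets_def sum_unfold_sum_mset)
  then show ?thesis
    unfolding T_partitions_eq_image by (rule has_gf_reindex[OF _ inj_on_assemble])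
qed

lemma finite_partitions: "finite (partitions n)"
proof (rule finite_subset)
  show "partitions n \<subseteq> (\<Union>k\<le>n. multisets_of_size {..n} k)"
  proof
    fix M assume "M \<in> partitions n"
    then have pos: "\<forall>x\<in>#M. 0 < x" and sum: "sum_mset M = n"
      by (auto simp: partitions_def)
    have "set_mset M \<subseteq> {..n}"
      using sum by (auto dest!: multi_member_split)
    moreover have "size M \<le> sum_mset M"
      using pos by (induction M) auto
    ultimately show "M \<in> (\<Union>k\<le>n. multisets_of_size {..n} k)"
      using sum by (auto simp: multisets_of_size_def)
  qed
qed auto

lemma T_series_has_sum:
  assumes "norm q < 1"
  shows "((\<lambda>n. of_nat (T n) * q ^ n) has_sum triple_sum q) UNIV"
proof -
  define F where "F n = {M \<in> partitions n. T_cond M}" for n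
  have inj: "inj_on snd (Sigma UNIV F)"
    by (auto simp: inj_on_def F_def partitions_def)
  have "snd ` Sigma UNIV F = T_partitions"
  proof
    show "T_partitions \<subseteq> snd ` Sigma UNIV F"
      by (auto simp: F_def partitions_def T_partitions_def image_iff intro!: bexI[of _ "(sum_mset _, _)"])
  qed (auto simp: F_def partitions_def T_partitions_def)
  moreover have "((\<lambda>M. q ^ sum_mset M) has_sum triple_sum q) T_partitions"
    using T_partitions_has_gf assms by (simp add: has_gf_def)
  ultimately have "((\<lambda>z. q ^ sum_mset (snd z)) has_sum triple_sum q) (Sigma UNIV F)"
    using has_sum_reindex[OF inj, of "\<lambda>M. q ^ sum_mset M"] by (simp add: o_def)
  then show ?thesis
  proof (rule has_sum_SigmaD)
    fix n
    have "finite (F n)"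
      by (rule finite_subset[OF _ finite_partitions[of n]]) (auto simp: F_def)
    moreover have "(\<Sum>M\<in>F n. q ^ sum_mset M) = of_nat (T n) * q ^ n"
      by (simp add: F_def T_def partitions_def)
    ultimately show "((\<lambda>M. q ^ sum_mset (snd (n, M))) has_sum of_nat (T n) * q ^ n) (F n)"
      by (simp add: has_sum_finiteI)
  qed
qed

theorem theorem11:
  fixes q :: complex
  assumes "norm q < 1"
  shows "summable (\<lambda>n. q ^ (2*n*(n+1)) * qpoch q (q^2) n * qpoch_inf (- (q ^ (2*n+2))) q
                         / qpoch (q^2) (q^2) n)
       \<and> (\<lambda>n. of_nat (T n) * q ^ n) sums
           (\<Sum>n. q ^ (2*n*(n+1)) * qpoch q (q^2) n * qpoch_inf (- (q ^ (2*n+2))) q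
                         / qpoch (q^2) (q^2) n)"
proof -
  have "series_term q sums triple_sum q"
    by (rule has_sum_imp_sums[OF series_term_has_sum_triple_sum[OF assms]])
  moreover have "(\<lambda>n. of_nat (T n) * q ^ n) sums triple_sum q"
    by (rule has_sum_imp_sums[OF T_series_has_sum[OF assms]])
  ultimately show ?thesis
    unfolding series_term_def by (simp add: sums_summable sums_unique[symmetric])
qed

end
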